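(* Let $\lambda$ be a nonempty partition with Frobenius coordinates $(\vec s|\vec t)$ of rank $d$. Then, as rational functions of $R$, $$\tilde s^{(R)}_\lambda=\left|\tilde s^{(R)}_{(s_i|t_j)}\right|_{d\times d}=\left|\frac{\Gamma(R-t_j)/\Gamma(R+s_i+1)}{s_i!\,t_j!\,(1+s_i+t_j)}\right|_{d\times d}.$$
   Context: For an integer $m\ge0$, $\tilde h^{(R)}_m:=\frac{(R-1)!}{(R+m-1)!\,m!}=\frac{1}{m!\,R(R+1)\cdots(R+m-1)}$, and $\tilde h^{(R)}_m:=0$ for $m<0$. For a partition $\mu$ with $l(\mu)$ parts, $\tilde s^{(R)}_\mu:=\left|\tilde h^{(R-j+1)}_{\mu_i-i+j}\right|_{l(\mu)\times l(\mu)}$ (determinant). Frobenius coordinates of a partition of rank $d$ (number of $i$ with $\lambda_i\ge i$): $s_i=\lambda_i-i$, $t_i=\lambda^t_i-i$; $(s|t)$ denotes the hook partition $(s+1,1^t)$. $\Gamma(R-t)/\Gamma(R+s+1)=1/\big((R-t)(R-t+1)\cdots(R+s)\big)$. *)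

theory Defs
  imports Complex_Main "Jordan_Normal_Form.Determinant"
begin

definition is_partition :: "nat list \<Rightarrow> bool" where
  "is_partition lam \<longleftrightarrow> sorted_wrt (\<ge>) lam \<and> 0 \<notin> set lam"

definition part :: "nat list \<Rightarrow> nat \<Rightarrow> nat" where
  "part lam i = (if 1 \<le> i \<and> i \<le> length lam then lam ! (i - 1) else 0)"

definition conj_part :: "nat list \<Rightarrow> nat \<Rightarrow> nat" where
  "conj_part lam i = card {k \<in> {1..length lam}. part lam k \<ge> i}"

definition prank :: "nat list \<Rightarrow> nat" where
  "prank lam = card {i \<in> {1..length lam}. part lam i \<ge> i}"

definition frob_s :: "nat list \<Rightarrow> nat \<Rightarrow> nat" where
  "frob_s lam i = part lam i - i"

definition frob_t :: "nat list \<Rightarrow> nat \<Rightarrow> nat" where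
  "frob_t lam i = conj_part lam i - i"

text \<open>Hook partition (s|t) = (s+1, 1^t).\<close>
definition hook :: "nat \<Rightarrow> nat \<Rightarrow> nat list" where
  "hook s t = (s + 1) # replicate t 1"

definition htilde :: "real \<Rightarrow> int \<Rightarrow> real" where
  "htilde R m = (if m < 0 then 0
     else 1 / (fact (nat m) * pochhammer R (nat m)))"

text \<open>s~^(R)_mu = det [h~^(R-j+1)_(mu_i - i + j)]_{i,j=1..l(mu)};
  written with 0-based indices i,j < l(mu).\<close>
definition stilde :: "real \<Rightarrow> nat list \<Rightarrow> real" where
  "stilde R mu = det (mat (length mu) (length mu)
     (\<lambda>(i, j). htilde (R - real j) (int (part mu (i + 1)) - int i + int j)))"

text \<open>Gamma(R-t)/Gamma(R+s+1) = 1/((R-t)(R-t+1)...(R+s)).\<close>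
definition gamma_ratio :: "real \<Rightarrow> nat \<Rightarrow> nat \<Rightarrow> real" where
  "gamma_ratio R s t = 1 / pochhammer (R - real t) (s + t + 1)"

end

theory Submission
  imports Defs
begin

text \<open>
  Let M = [h~^(R-j)_(lambda_i - i + j)] be the l x l matrix defining s~_lambda. It factors as
  M = N U with U = [h~^(R-j)_(j-k)] unitriangular. For i > d, row i of M is row i - 1 - lambda_i
  of U, so row i of N is a unit vector. For i \<le> d, row i of N is ((-1)^k c(s_i, k))_k, where
  c(s, t) is the closed form on the right-hand side of the theorem: the required convolution
  sum_k (-1)^k c(a, k) h~^(R-j)_(j-k) = h~^(R-j)_(a+1+j) reduces to the beta-integral identity
  sum_k (-1)^k C(m,k)/(x+k) = m!/(x(x+1)...(x+m)).
  The columns t_1 > ... > t_d and the positions i - 1 - lambda_i (i > d) of the unit rows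
  partition {0, ..., l-1}, so expanding det N along its unit rows leaves the minor of the first
  d rows on the columns t_j, in which the signs (-1)^(t_j) cancel. Applied to a hook, which has
  rank 1, the same formula shows c(s, t) = s~_(s|t).
\<close>

lemma det_expand_first_column:
  fixes f :: "nat \<Rightarrow> nat \<Rightarrow> 'a::comm_ring_1"
  assumes "0 < d"
  shows "det (mat d d (\<lambda>(i, k). f i k)) =
    (\<Sum>i<d. (-1)^i * f i 0 * det (mat (d - 1) (d - 1) (\<lambda>(p, k). f (insert_index i p) (Suc k))))"
proof -
  let ?F = "mat d d (\<lambda>(i, k). f i k)"
  let ?minor = "\<lambda>i. mat (d - 1) (d - 1) (\<lambda>(p, k). f (insert_index i p) (Suc k))"
  have "det ?F = (\<Sum>i<d. ?F $$ (i, 0) * cofactor ?F i 0)"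
    by (rule laplace_expansion_column) (use assms in auto)
  also have "\<dots> = (\<Sum>i<d. (-1)^i * f i 0 * det (?minor i))"
  proof (rule sum.cong[OF refl])
    fix i assume i: "i \<in> {..<d}"
    then have "mat_delete ?F i 0 = ?minor i"
      by (intro eq_matI) (auto simp: mat_delete_def insert_index_def)
    then show "?F $$ (i, 0) * cofactor ?F i 0 = (-1)^i * f i 0 * det (?minor i)"
      using i assms by (simp add: cofactor_def)
  qed
  finally show ?thesis .
qed

lemma det_expand_column_top_rows:
  fixes M :: "'a::comm_ring_1 mat"
  assumes "M \<in> carrier_mat n n" "j < n" "d \<le> n"
    and "\<And>i. d \<le> i \<Longrightarrow> i < n \<Longrightarrow> M $$ (i, j) = 0"
  shows "det M = (\<Sum>i<d. M $$ (i, j) * cofactor M i j)"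
proof -
  have "det M = (\<Sum>i<n. M $$ (i, j) * cofactor M i j)"
    by (rule laplace_expansion_column[OF assms(1,2)])
  also have "\<dots> = (\<Sum>i<d. M $$ (i, j) * cofactor M i j)"
    by (rule sum.mono_neutral_right) (use assms(3,4) in auto)
  finally show ?thesis .
qed

lemma det_last_row_unit:
  fixes M :: "'a::comm_ring_1 mat"
  assumes "M \<in> carrier_mat (Suc n) (Suc n)"
    and "\<And>j. j < Suc n \<Longrightarrow> M $$ (n, j) = of_bool (j = n)"
  shows "det M = det (mat_delete M n n)"
proof -
  have "det M = (\<Sum>j<Suc n. M $$ (n, j) * cofactor M n j)"
    by (rule laplace_expansion_row[OF assms(1)]) simp
  also have "\<dots> = cofactor M n n"
    using assms(2) by (simp add: sum.lessThan_Suc)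
  finally show ?thesis by (simp add: cofactor_def)
qed

lemma image_Un_image_eq_lessThan:
  fixes b u :: "nat \<Rightarrow> nat" and d n :: nat
  assumes "inj_on b {..<d}" "inj_on u {d..<n}" "b ` {..<d} \<inter> u ` {d..<n} = {}"
    and "b ` {..<d} \<subseteq> {..<n}" "u ` {d..<n} \<subseteq> {..<n}" "d \<le> n"
  shows "b ` {..<d} \<union> u ` {d..<n} = {..<n}"
proof (rule card_subset_eq)
  have "card (b ` {..<d} \<union> u ` {d..<n}) = card (b ` {..<d}) + card (u ` {d..<n})"
    by (rule card_Un_disjoint) (use assms(3) in auto)
  also have "\<dots> = card {..<n}"
    using card_image[OF assms(1)] card_image[OF assms(2)] assms(6) by simp
  finally show "card (b ` {..<d} \<union> u ` {d..<n}) = card {..<n}" .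
qed (use assms(4,5) in auto)

lemma max_index_top_or_unit_row:
  fixes b u :: "nat \<Rightarrow> nat"
  assumes "d \<le> Suc n"
    and "\<And>k. k < d \<Longrightarrow> b k < Suc n"
    and "\<And>k k'. k < k' \<Longrightarrow> k' < d \<Longrightarrow> b k' < b k"
    and "\<And>i i'. d \<le> i \<Longrightarrow> i < i' \<Longrightarrow> i' < Suc n \<Longrightarrow> u i < u i'"
    and "\<And>i. d \<le> i \<Longrightarrow> i < Suc n \<Longrightarrow> u i < Suc n"
    and "\<And>k i. k < d \<Longrightarrow> d \<le> i \<Longrightarrow> i < Suc n \<Longrightarrow> b k \<noteq> u i"
  shows "0 < d \<and> b 0 = n \<or> d \<le> n \<and> u n = n"
proof -
  have "b ` {..<d} \<union> u ` {d..<Suc n} = {..<Suc n}"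
  proof (rule image_Un_image_eq_lessThan)
    show "inj_on b {..<d}"
      by (rule inj_onI) (metis assms(3) lessThan_iff nat_neq_iff)
    show "inj_on u {d..<Suc n}"
      by (rule inj_onI) (metis assms(4) atLeastLessThan_iff nat_neq_iff)
  qed (use assms(1,2,5,6) in auto)
  then have "n \<in> b ` {..<d} \<union> u ` {d..<Suc n}" by simp
  then consider k where "k < d" "b k = n" | i where "d \<le> i" "i < Suc n" "u i = n"
    by fastforce
  then show ?thesis
  proof cases
    case (1 k)
    then have "b k \<le> b 0" using assms(3) by (cases k) (auto intro: less_imp_le)
    with 1 assms(2)[of 0] show ?thesis by simp
  next
    case (2 i)
    have "i = n"
    proof (rule ccontr)
      assume "i \<noteq> n"
      with 2 have "u i < u n" using assms(4)[of i n] by linarith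
      with 2 assms(5)[of n] show False by simp
    qed
    with 2 show ?thesis by simp
  qed
qed

lemma det_top_rows_unit_rows:
  fixes C :: "nat \<Rightarrow> nat \<Rightarrow> 'a::comm_ring_1" and b u :: "nat \<Rightarrow> nat"
  assumes "d \<le> n"
    and "\<And>k. k < d \<Longrightarrow> b k < n"
    and "\<And>k k'. k < k' \<Longrightarrow> k' < d \<Longrightarrow> b k' < b k"
    and "\<And>i i'. d \<le> i \<Longrightarrow> i < i' \<Longrightarrow> i' < n \<Longrightarrow> u i < u i'"
    and "\<And>i. d \<le> i \<Longrightarrow> i < n \<Longrightarrow> u i < n"
    and "\<And>k i. k < d \<Longrightarrow> d \<le> i \<Longrightarrow> i < n \<Longrightarrow> b k \<noteq> u i"
  shows "det (mat n n (\<lambda>(i, j). if i < d then C i j else of_bool (j = u i))) =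
         det (mat d d (\<lambda>(i, k). (-1)^(b k) * C i (b k)))"
  using assms
proof (induction n arbitrary: d C b u)
  case 0
  then show ?case by simp
next
  case (Suc n)
  define M where "M = mat (Suc n) (Suc n) (\<lambda>(i, j). if i < d then C i j else of_bool (j = u i))"
  have M: "M \<in> carrier_mat (Suc n) (Suc n)" by (simp add: M_def)
  have "0 < d \<and> b 0 = n \<or> d \<le> n \<and> u n = n"
    by (rule max_index_top_or_unit_row) (fact Suc.prems)+
  then show ?case
  proof (elim disjE conjE)
    assume d: "0 < d" and b0: "b 0 = n"
    have u_less: "u i < n" if "d \<le> i" "i < Suc n" for i
      using Suc.prems(5)[OF that] Suc.prems(6)[OF d that] b0 by fastforce
    let ?minor = "\<lambda>i. mat (d - 1) (d - 1)
      (\<lambda>(p, k). (-1)^(b (Suc k)) * C (insert_index i p) (b (Suc k)))"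
    have "det M = (\<Sum>i<d. M $$ (i, n) * cofactor M i n)"
      by (rule det_expand_column_top_rows[OF M]) (use Suc.prems(1,6) d b0 in \<open>auto simp: M_def\<close>)
    also have "\<dots> = (\<Sum>i<d. (-1)^i * ((-1)^(b 0) * C i (b 0)) * det (?minor i))"
    proof (rule sum.cong[OF refl])
      fix i assume i: "i \<in> {..<d}"
      have "mat_delete M i n =
          mat n n (\<lambda>(p, q). if p < d - 1 then C (insert_index i p) q else of_bool (q = u (Suc p)))"
        using i by (intro eq_matI) (auto simp: M_def mat_delete_def insert_index_def)
      also have "det \<dots> = det (?minor i)"
        by (rule Suc.IH) (use Suc.prems d b0 u_less in \<open>auto simp: less_diff_conv\<close>)
      finally show "M $$ (i, n) * cofactor M i n = (-1)^i * ((-1)^(b 0) * C i (b 0)) * det (?minor i)"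
        using i b0 Suc.prems(1) by (simp add: M_def cofactor_def power_add mult_ac)
    qed
    also have "\<dots> = det (mat d d (\<lambda>(i, k). (-1)^(b k) * C i (b k)))"
      by (subst det_expand_first_column) (use d in simp_all)
    finally show ?thesis by (simp add: M_def)
  next
    assume d: "d \<le> n" and u_last: "u n = n"
    have "det M = det (mat_delete M n n)"
      by (rule det_last_row_unit[OF M]) (use d u_last in \<open>simp add: M_def\<close>)
    also have "mat_delete M n n = mat n n (\<lambda>(i, j). if i < d then C i j else of_bool (j = u i))"
      by (intro eq_matI) (auto simp: M_def mat_delete_def)
    also have "det \<dots> = det (mat d d (\<lambda>(i, k). (-1)^(b k) * C i (b k)))"
    proof (rule Suc.IH)
      show "u i < n" if "d \<le> i" "i < n" for i
        using Suc.prems(4)[OF that(1) that(2)] u_last by simp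
      show "b k < n" if "k < d" for k
        using Suc.prems(2)[OF that] Suc.prems(6)[OF that, of n] d u_last by fastforce
    qed (use Suc.prems d in auto)
    finally show ?thesis by (simp add: M_def)
  qed
qed

lemma alternating_binomial_reciprocal_sum:
  fixes x :: "'a::field_char_0"
  assumes "pochhammer x (Suc m) \<noteq> 0"
  shows "(\<Sum>k\<le>m. (-1)^k * of_nat (m choose k) / (x + of_nat k)) = fact m / pochhammer x (Suc m)"
  using assms
proof (induction m arbitrary: x)
  case 0
  then show ?case by simp
next
  case (Suc m)
  let ?S = "\<lambda>x. \<Sum>k\<le>m. (-1)^k * of_nat (m choose k) / (x + of_nat k) :: 'a"
  have x0: "x \<noteq> 0" and px: "pochhammer (x + 1) (Suc m) \<noteq> 0"
    using Suc.prems unfolding pochhammer_rec[of x "Suc m"] by auto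
  have pm: "pochhammer x (Suc m) \<noteq> 0"
    using Suc.prems unfolding pochhammer_Suc[of x "Suc m"] by auto
  have "(\<Sum>k\<le>Suc m. (-1)^k * of_nat (Suc m choose k) / (x + of_nat k)) = ?S x - ?S (x + 1)"
    \<comment> \<open>Pascal's rule\<close>
  proof -
    have "?S x = (\<Sum>k\<le>Suc m. (-1)^k * of_nat (m choose k) / (x + of_nat k))"
      by simp
    also have "\<dots> = 1 / x - (\<Sum>k\<le>m. (-1)^k * of_nat (m choose Suc k) / (x + 1 + of_nat k))"
      by (subst sum.atMost_Suc_shift) (simp add: sum_negf[symmetric] add_ac)
    finally show ?thesis
      by (subst sum.atMost_Suc_shift)
         (simp add: sum_negf[symmetric] sum.distrib[symmetric] add_divide_distrib
            diff_divide_distrib ring_distribs add_ac)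
  qed
  also have "\<dots> = fact m / pochhammer x (Suc m) - fact m / pochhammer (x + 1) (Suc m)"
    using Suc.IH pm px by simp
  also have "\<dots> = fact m * (x + of_nat (Suc m)) / pochhammer x (Suc (Suc m))
      - fact m * x / pochhammer x (Suc (Suc m))"
  proof -
    have "fact m / pochhammer x (Suc m) = fact m * (x + of_nat (Suc m)) / pochhammer x (Suc (Suc m))"
      using Suc.prems unfolding pochhammer_Suc[of x "Suc m"] by simp
    moreover have "fact m / pochhammer (x + 1) (Suc m) = fact m * x / pochhammer x (Suc (Suc m))"
      using x0 unfolding pochhammer_rec[of x "Suc m"] by simp
    ultimately show ?thesis by simp
  qed
  also have "\<dots> = fact (Suc m) / pochhammer x (Suc (Suc m))"
    by (simp add: diff_divide_distrib[symmetric] algebra_simps)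
  finally show ?case .
qed

lemma pochhammer_nonzero_if_not_Ints:
  fixes x :: "'a::field_char_0"
  assumes "x \<notin> \<int>"
  shows "pochhammer x n \<noteq> 0"
  using assms by (auto simp: pochhammer_eq_0_iff)

definition hook_closed_form :: "real \<Rightarrow> nat \<Rightarrow> nat \<Rightarrow> real" where
  "hook_closed_form R s t = gamma_ratio R s t / (fact s * fact t * (1 + real s + real t))"

lemma htilde_hook_convolution:
  assumes R: "R \<notin> \<int>" and "j < n"
  shows "(\<Sum>k<n. (-1)^k * hook_closed_form R a k * htilde (R - real j) (int j - int k)) =
    htilde (R - real j) (int a + 1 + int j)"
proof -
  have not_Ints: "R - real i \<notin> \<int>" for i
    using R Ints_add[of "R - real i" "real i"] by auto
  define P where "P = pochhammer (R - real j) (a + j + 1)"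
  have "(\<Sum>k<n. (-1)^k * hook_closed_form R a k * htilde (R - real j) (int j - int k)) =
        (\<Sum>k\<le>j. (-1)^k * hook_closed_form R a k * htilde (R - real j) (int j - int k))"
    by (rule sum.mono_neutral_right) (use \<open>j < n\<close> in \<open>auto simp: htilde_def\<close>)
  also have "\<dots> = (\<Sum>k\<le>j. 1 / (fact a * fact j * P) *
      ((-1)^k * of_nat (j choose k) / (real a + 1 + of_nat k)))"
  proof (rule sum.cong[OF refl])
    fix k assume "k \<in> {..j}"
    then have kj: "k \<le> j" by simp
    have split_P: "P = pochhammer (R - real j) (j - k) * pochhammer (R - real k) (a + k + 1)"
      using pochhammer_product'[of "R - real j" "j - k" "a + k + 1"] kj
      by (simp add: P_def of_nat_diff add_ac)
    have "pochhammer (R - real j) (j - k) \<noteq> 0" "pochhammer (R - real k) (a + k + 1) \<noteq> 0"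
      using not_Ints by (simp_all add: pochhammer_nonzero_if_not_Ints)
    moreover have "nat (int j - int k) = j - k" using kj by simp
    ultimately show "(-1)^k * hook_closed_form R a k * htilde (R - real j) (int j - int k) =
        1 / (fact a * fact j * P) * ((-1)^k * of_nat (j choose k) / (real a + 1 + of_nat k))"
      unfolding split_P binomial_fact[OF kj] using kj
      by (simp add: hook_closed_form_def gamma_ratio_def htilde_def field_simps add_ac)
  qed
  also have "\<dots> = 1 / (fact a * fact j * P) * (fact j / pochhammer (real a + 1) (Suc j))"
    by (subst alternating_binomial_reciprocal_sum[symmetric])
       (simp_all add: sum_distrib_left pochhammer_eq_0_iff del: pochhammer_Suc)
  also have "\<dots> = 1 / (fact (a + 1 + j) * P)"
  proof -
    have "fact (a + 1 + j) = fact a * pochhammer (real a + 1) (Suc j)"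
      using pochhammer_product'[of 1 a "Suc j"] by (simp add: pochhammer_fact add_ac)
    then show ?thesis by simp
  qed
  also have "\<dots> = htilde (R - real j) (int a + 1 + int j)"
    by (simp add: htilde_def P_def nat_add_distrib add_ac)
  finally show ?thesis .
qed

lemma det_htilde_unitriangular:
  "det (mat n n (\<lambda>(k, j). htilde (R - real j) (int j - int k))) = 1"
  by (subst det_upper_triangular[of _ n]) (auto simp: upper_triangular_def htilde_def prod_list_diag_prod)

lemma part_antimono:
  assumes "is_partition lam" "1 \<le> i" "i \<le> j"
  shows "part lam j \<le> part lam i"
proof (cases "j \<le> length lam \<and> i \<noteq> j")
  case True
  with assms have "i - 1 < j - 1" "j - 1 < length lam" by linarith+
  then have "lam ! (j - 1) \<le> lam ! (i - 1)"
    using assms(1) sorted_wrt_nth_less by (fastforce simp: is_partition_def)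
  then show ?thesis using True assms by (simp add: part_def)
qed (auto simp: part_def)

lemma down_closed_eq_atLeastAtMost_card:
  fixes S :: "nat set"
  assumes "S \<subseteq> {1..n}" "\<And>k k'. k \<in> S \<Longrightarrow> 1 \<le> k' \<Longrightarrow> k' \<le> k \<Longrightarrow> k' \<in> S"
  shows "S = {1..card S}"
proof (cases "S = {}")
  case False
  define m where "m = Max S"
  have "finite S" using assms(1) finite_subset by blast
  with False have "m \<in> S" by (simp add: m_def)
  have "S = {1..m}"
  proof
    show "S \<subseteq> {1..m}" using assms(1) \<open>finite S\<close> by (auto simp: m_def)
    show "{1..m} \<subseteq> S" using assms(2) \<open>m \<in> S\<close> by auto
  qed
  then show ?thesis by simp
qed simp

lemma le_part_iff_le_prank:
  assumes "is_partition lam" "1 \<le> i" "i \<le> length lam"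
  shows "i \<le> part lam i \<longleftrightarrow> i \<le> prank lam"
proof -
  let ?S = "{i \<in> {1..length lam}. i \<le> part lam i}"
  have "?S = {1..card ?S}"
  proof (rule down_closed_eq_atLeastAtMost_card[of _ "length lam"])
    show "k' \<in> ?S" if "k \<in> ?S" "1 \<le> k'" "k' \<le> k" for k k'
      using that part_antimono[OF assms(1) that(2,3)] by auto
  qed auto
  then have "i \<in> ?S \<longleftrightarrow> i \<in> {1..prank lam}" by (simp add: prank_def)
  then show ?thesis using assms by auto
qed

lemma prank_le_length: "prank lam \<le> length lam"
  unfolding prank_def by (rule order.trans[OF card_mono[of "{1..length lam}"]]) auto

lemma conj_part_le_length: "conj_part lam q \<le> length lam"
  unfolding conj_part_def by (rule order.trans[OF card_mono[of "{1..length lam}"]]) auto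

lemma conj_part_antimono: "q \<le> q' \<Longrightarrow> conj_part lam q' \<le> conj_part lam q"
  unfolding conj_part_def by (rule card_mono) auto

lemma le_part_iff_le_conj_part:
  assumes "is_partition lam" "1 \<le> q" "1 \<le> k"
  shows "q \<le> part lam k \<longleftrightarrow> k \<le> conj_part lam q"
proof -
  let ?S = "{k \<in> {1..length lam}. q \<le> part lam k}"
  have "?S = {1..card ?S}"
  proof (rule down_closed_eq_atLeastAtMost_card[of _ "length lam"])
    show "k' \<in> ?S" if "k \<in> ?S" "1 \<le> k'" "k' \<le> k" for k k'
      using that part_antimono[OF assms(1) that(2,3)] by auto
  qed auto
  then have S: "?S = {1..conj_part lam q}" by (simp add: conj_part_def)
  show ?thesis
  proof (cases "k \<le> length lam")
    case True
    then show ?thesis using S assms by (simp add: set_eq_iff) (metis atLeastAtMost_iff)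
  next
    case False
    then show ?thesis using conj_part_le_length[of lam q] assms by (auto simp: part_def)
  qed
qed

lemma le_conj_part_if_le_prank:
  assumes "is_partition lam" "1 \<le> k" "k \<le> prank lam"
  shows "k \<le> conj_part lam k"
  using assms prank_le_length[of lam]
  by (simp add: le_part_iff_le_prank le_part_iff_le_conj_part[symmetric])

lemma part_less_if_prank_less:
  assumes "is_partition lam" "prank lam < i" "i \<le> length lam"
  shows "part lam i < i"
  using assms le_part_iff_le_prank[OF assms(1), of i] by simp

lemma frob_t_less_length:
  assumes "is_partition lam" "1 \<le> k" "k \<le> prank lam"
  shows "frob_t lam k < length lam"
  using le_conj_part_if_le_prank[OF assms] conj_part_le_length[of lam k] assms(2)
  by (simp add: frob_t_def)

lemma frob_t_strict_antimono:
  assumes "is_partition lam" "1 \<le> k" "k < k'" "k' \<le> prank lam"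
  shows "frob_t lam k' < frob_t lam k"
  using le_conj_part_if_le_prank[OF assms(1) _ assms(4)] conj_part_antimono[of k k' lam] assms
  by (simp add: frob_t_def)

lemma minus_part_strict_mono:
  assumes "is_partition lam" "prank lam < i" "i < i'" "i' \<le> length lam"
  shows "i - 1 - part lam i < i' - 1 - part lam i'"
  using part_antimono[OF assms(1), of i i'] part_less_if_prank_less[OF assms(1), of i]
    part_less_if_prank_less[OF assms(1), of i'] assms
  by linarith

lemma frob_t_ne_minus_part:
  assumes "is_partition lam" "1 \<le> k" "k \<le> prank lam" "prank lam < i" "i \<le> length lam"
  shows "frob_t lam k \<noteq> i - 1 - part lam i"
  using le_conj_part_if_le_prank[OF assms(1-3)] part_less_if_prank_less[OF assms(1,4,5)]
    le_part_iff_le_conj_part[OF assms(1,2), of i] assms(4)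
  by (cases "k \<le> part lam i") (auto simp: frob_t_def)

lemma stilde_mat_factorization:
  fixes R :: real and lam :: "nat list"
  assumes lam: "is_partition lam" and R: "R \<notin> \<int>"
  defines "n \<equiv> length lam"
  shows "mat n n (\<lambda>(i, j). htilde (R - real j) (int (part lam (i + 1)) - int i + int j)) =
    mat n n (\<lambda>(i, k). if i < prank lam then (-1)^k * hook_closed_form R (frob_s lam (i + 1)) k
                      else of_bool (k = i - part lam (i + 1))) *
    mat n n (\<lambda>(k, j). htilde (R - real j) (int j - int k))"
  (is "?M = ?N * ?U")
proof (rule eq_matI)
  fix i j assume "i < dim_row (?N * ?U)" "j < dim_col (?N * ?U)"
  then have i: "i < n" and j: "j < n" by simp_all
  have "(?N * ?U) $$ (i, j) = (\<Sum>k<n. ?N $$ (i, k) * ?U $$ (k, j))"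
    using i j by (simp add: scalar_prod_def atLeast0LessThan)
  also have "\<dots> = ?M $$ (i, j)"
  proof (cases "i < prank lam")
    case True
    then have "i + 1 \<le> part lam (i + 1)"
      using le_part_iff_le_prank[OF lam, of "i + 1"] i by (simp add: n_def)
    have "(\<Sum>k<n. ?N $$ (i, k) * ?U $$ (k, j)) =
        (\<Sum>k<n. (-1)^k * hook_closed_form R (frob_s lam (i + 1)) k * htilde (R - real j) (int j - int k))"
      using True i j by (intro sum.cong) auto
    also have "\<dots> = htilde (R - real j) (int (frob_s lam (i + 1)) + 1 + int j)"
      by (rule htilde_hook_convolution[OF R j])
    finally show ?thesis
      using i j \<open>i + 1 \<le> part lam (i + 1)\<close> by (simp add: frob_s_def of_nat_diff)
  next
    case False
    then have "part lam (i + 1) \<le> i"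
      using part_less_if_prank_less[OF lam, of "i + 1"] i by (simp add: n_def)
    have "(\<Sum>k<n. ?N $$ (i, k) * ?U $$ (k, j)) =
        (\<Sum>k<n. if k = i - part lam (i + 1) then ?U $$ (k, j) else 0)"
      using False i j by (intro sum.cong) auto
    also have "\<dots> = ?U $$ (i - part lam (i + 1), j)"
      using i by simp
    finally show ?thesis
      using i j \<open>part lam (i + 1) \<le> i\<close> by (simp add: of_nat_diff algebra_simps)
  qed
  finally show "?M $$ (i, j) = (?N * ?U) $$ (i, j)" ..
qed auto

theorem stilde_giambelli:
  fixes R :: real
  assumes lam: "is_partition lam" and R: "R \<notin> \<int>"
  shows "stilde R lam = det (mat (prank lam) (prank lam)
    (\<lambda>(i, j). hook_closed_form R (frob_s lam (i + 1)) (frob_t lam (j + 1))))"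
proof -
  define n where "n = length lam"
  define d where "d = prank lam"
  define N where "N = mat n n (\<lambda>(i, k). if i < d then (-1)^k * hook_closed_form R (frob_s lam (i + 1)) k
                      else of_bool (k = i - part lam (i + 1)))"
  define U where "U = mat n n (\<lambda>(k, j). htilde (R - real j) (int j - int k))"
  have "stilde R lam = det (N * U)"
    unfolding stilde_def N_def U_def n_def d_def stilde_mat_factorization[OF lam R] ..
  also have "\<dots> = det N"
    using det_mult[of N n U] det_htilde_unitriangular[of n R] by (simp add: N_def U_def)
  also have "\<dots> = det (mat d d (\<lambda>(i, k). (-1)^(frob_t lam (k + 1)) *
      ((-1)^(frob_t lam (k + 1)) * hook_closed_form R (frob_s lam (i + 1)) (frob_t lam (k + 1)))))"
    unfolding N_def
  proof (rule det_top_rows_unit_rows)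
    show "d \<le> n" by (simp add: d_def n_def prank_le_length)
    show "frob_t lam (k + 1) < n" if "k < d" for k
      using frob_t_less_length[OF lam, of "k + 1"] that by (simp add: d_def n_def)
    show "frob_t lam (k' + 1) < frob_t lam (k + 1)" if "k < k'" "k' < d" for k k'
      using frob_t_strict_antimono[OF lam, of "k + 1" "k' + 1"] that by (simp add: d_def)
    show "i - part lam (i + 1) < i' - part lam (i' + 1)" if "d \<le> i" "i < i'" "i' < n" for i i'
      using minus_part_strict_mono[OF lam, of "i + 1" "i' + 1"] that by (simp add: d_def n_def)
    show "i - part lam (i + 1) < n" if "d \<le> i" "i < n" for i
      using that by simp
    show "frob_t lam (k + 1) \<noteq> i - part lam (i + 1)" if "k < d" "d \<le> i" "i < n" for k i
      using frob_t_ne_minus_part[OF lam, of "k + 1" "i + 1"] that by (simp add: d_def n_def)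
  qed
  also have "\<dots> = det (mat d d (\<lambda>(i, j). hook_closed_form R (frob_s lam (i + 1)) (frob_t lam (j + 1))))"
    by (simp flip: mult.assoc power_add)
  finally show ?thesis by (simp add: d_def)
qed

lemma part_hook: "part (hook a b) i = (if i = 1 then a + 1 else if 2 \<le> i \<and> i \<le> b + 1 then 1 else 0)"
  unfolding part_def hook_def by (cases i; cases "i - 1") (auto simp: nth_Cons')

lemma length_hook [simp]: "length (hook a b) = b + 1"
  by (simp add: hook_def)

lemma is_partition_hook: "is_partition (hook a b)"
  unfolding is_partition_def hook_def by (induction b) auto

lemma prank_hook: "prank (hook a b) = 1"
proof -
  have "{i \<in> {1..length (hook a b)}. i \<le> part (hook a b) i} = {1}"
    by (auto simp: part_hook)
  then show ?thesis by (simp add: prank_def)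
qed

lemma frob_s_hook: "frob_s (hook a b) 1 = a"
  by (simp add: frob_s_def part_hook)

lemma frob_t_hook: "frob_t (hook a b) 1 = b"
proof -
  have "{k \<in> {1..length (hook a b)}. 1 \<le> part (hook a b) k} = {1..b + 1}"
    by (auto simp: part_hook)
  then show ?thesis by (simp add: frob_t_def conj_part_def)
qed

lemma stilde_hook:
  assumes "R \<notin> \<int>"
  shows "stilde R (hook a b) = hook_closed_form R a b"
proof -
  have "stilde R (hook a b) = det (mat 1 1
      (\<lambda>(i, j). hook_closed_form R (frob_s (hook a b) (i + 1)) (frob_t (hook a b) (j + 1))))"
    using stilde_giambelli[OF is_partition_hook assms] by (simp add: prank_hook)
  also have "\<dots> = hook_closed_form R a b"
    by (subst det_single) (auto simp: frob_s_hook[unfolded One_nat_def] frob_t_hook[unfolded One_nat_def])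
  finally show ?thesis .
qed

theorem mainTheorem9:
  fixes lam :: "nat list" and R :: real
  assumes "is_partition lam" and "lam \<noteq> []" and "R \<notin> \<int>"
  defines "d \<equiv> prank lam"
  shows "stilde R lam =
           det (mat d d (\<lambda>(i, j). stilde R (hook (frob_s lam (i + 1)) (frob_t lam (j + 1))))) \<and>
         det (mat d d (\<lambda>(i, j). stilde R (hook (frob_s lam (i + 1)) (frob_t lam (j + 1))))) =
           det (mat d d (\<lambda>(i, j).
              gamma_ratio R (frob_s lam (i + 1)) (frob_t lam (j + 1)) /
              (fact (frob_s lam (i + 1)) * fact (frob_t lam (j + 1)) *
               (1 + real (frob_s lam (i + 1)) + real (frob_t lam (j + 1))))))"
  using stilde_giambelli[OF assms(1,3)]
  by (simp add: d_def stilde_hook[OF assms(3)] hook_closed_form_def)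

end
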